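(* Let $(\psi_j)_{j\ge1}$ be an orthonormal basis of $\mathbb L^2([0,1])$ consisting of infinitely differentiable functions and $(\lambda_j)_{j\ge1}$ a summable sequence of positive numbers such that: there exists $\varsigma\ge0$ such that for every integer $\ell\ge0$ there is $M_\ell>0$ with $|\partial^\ell\psi_j(u)|\le M_\ell\,j^{\ell+\varsigma}$ for all $j\ge1$, $u\in[0,1]$; and there exist $c,\gamma>0$ with $\lambda_j\le c\,j^{-(\gamma+1)}$ for all $j\ge1$. Let $\alpha:=\gamma-2\varsigma$ and assume $\alpha>0$; let $m:=\max\{k\in\mathbb Z:k<\alpha\}$, $\beta:=\alpha-m$, and $K(s,t)=\sum_{j\ge1}\lambda_j\psi_j(s)\psi_j(t)$. Then: if $\alpha$ is not an integer, $K\in C^{m,\beta}([0,1]^2)$; if $\alpha$ is an integer (so $\beta=1$), $K\in C^{m,\delta}([0,1]^2)$ for every $\delta\in(0,1)$.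
   Context: For $m\in\{0,1,\dots\}$ and $\beta\in(0,1]$, $C^{m,\beta}([0,1]^2)$ is the set of $K\in C^m([0,1]^2)$ for which there is $L>0$ such that for every multi-index $\mathbf v$ with $|\mathbf v|=m$ and all $(s,t),(s',t')\in[0,1]^2$, $|\partial^{\mathbf v}K(s,t)-\partial^{\mathbf v}K(s',t')|\le L\|(s,t)-(s',t')\|^\beta$ (Euclidean norm). *)

theory Defs
  imports "HOL-Analysis.Analysis"
begin

definition L2_01 :: "(real \<Rightarrow> real) \<Rightarrow> bool" where
  "L2_01 f \<longleftrightarrow> f measurable_on {0..1} \<and> (\<lambda>x. (f x)^2) integrable_on {0..1}"

definition inner_L2_01 :: "(real \<Rightarrow> real) \<Rightarrow> (real \<Rightarrow> real) \<Rightarrow> real" where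
  "inner_L2_01 f g = integral {0..1} (\<lambda>x. f x * g x)"

definition orthonormal_basis_L2_01 :: "(nat \<Rightarrow> real \<Rightarrow> real) \<Rightarrow> bool" where
  "orthonormal_basis_L2_01 \<psi> \<longleftrightarrow>
     (\<forall>j\<ge>1. L2_01 (\<psi> j)) \<and>
     (\<forall>i\<ge>1. \<forall>j\<ge>1. inner_L2_01 (\<psi> i) (\<psi> j) = (if i = j then 1 else 0)) \<and>
     (\<forall>f. L2_01 f \<longrightarrow>
        (\<lambda>n. integral {0..1}
               (\<lambda>x. (f x - (\<Sum>j=1..n. inner_L2_01 f (\<psi> j) * \<psi> j x))^2)) \<longlonglongrightarrow> 0)"

definition unit_square :: "(real \<times> real) set" where
  "unit_square = {0..1} \<times> {0..1}"

text \<open>C^{m,beta}([0,1]^2): D a b plays the role of the partial derivative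
  d^a/ds^a d^b/dt^b K (one-sided at the boundary); all partials of order <= m exist
  and are continuous on the square, and those of order exactly m are beta-Hoelder
  w.r.t. the Euclidean norm (the norm on real \<times> real is Euclidean).\<close>
definition holder_C :: "nat \<Rightarrow> real \<Rightarrow> (real \<times> real \<Rightarrow> real) \<Rightarrow> bool" where
  "holder_C m \<beta> K \<longleftrightarrow>
    (\<exists>D :: nat \<Rightarrow> nat \<Rightarrow> real \<times> real \<Rightarrow> real.
       (\<forall>p\<in>unit_square. D 0 0 p = K p) \<and>
       (\<forall>a b. a + b \<le> m \<longrightarrow> continuous_on unit_square (D a b)) \<and>
       (\<forall>a b. a + b < m \<longrightarrow> (\<forall>s\<in>{0..1}. \<forall>t\<in>{0..1}.
           ((\<lambda>x. D a b (x, t)) has_real_derivative D (Suc a) b (s, t)) (at s within {0..1}) \<and>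
           ((\<lambda>y. D a b (s, y)) has_real_derivative D a (Suc b) (s, t)) (at t within {0..1}))) \<and>
       (\<exists>L>0. \<forall>a b. a + b = m \<longrightarrow>
           (\<forall>p\<in>unit_square. \<forall>q\<in>unit_square. \<bar>D a b p - D a b q\<bar> \<le> L * dist p q powr \<beta>)))"

end

theory Submission
  imports Defs
begin

text \<open>
  The j-th term of the series for the derivative of order (a, b) of K is
  \<lambda>_j \<psi>_j^(a)(s) \<psi>_j^(b)(t); it is bounded by C j^(a+b-\<alpha>-1) and is Lipschitz with
  constant C j^(a+b-\<alpha>). For a + b \<le> m < \<alpha> these bounds are summable, so the
  differentiated series converge uniformly and may be differentiated termwise.
  For a + b = m and 0 < e \<le> \<beta>, e < 1, split the series of differences at N \<approx> 1/|p - q|: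
  the Lipschitz bound controls the head and the sup bound the tail, each by O(|p - q|^e).
\<close>

section \<open>Estimates for sums of powers\<close>

lemma one_minus_powr_le:
  fixes r x :: real
  assumes "0 \<le> r" "r \<le> 1" "0 \<le> x" "x \<le> 1"
  shows "(1 - x) powr r \<le> 1 - r * x"
proof (cases "x = 1")
  case True
  then show ?thesis using assms by simp
next
  case False
  then have "x < 1" using assms by simp
  have "(1 - x) powr r * 1 powr (1 - r) \<le> r * (1 - x) + (1 - r) * 1"
    by (rule Youngs_inequality_0) (use assms \<open>x < 1\<close> in auto)
  then show ?thesis by (simp add: algebra_simps)
qed

lemma Suc_powr_neg_le_powr_diff:
  fixes d :: real
  assumes "0 \<le> d" "d < 1"
  shows "real (Suc N) powr (-d) \<le> (real (Suc N) powr (1-d) - real N powr (1-d)) / (1-d)"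
proof -
  define n where "n = real (Suc N)"
  have n1: "n \<ge> 1" unfolding n_def by simp
  have "real N = n * (1 - 1/n)" using n1 unfolding n_def by (simp add: field_simps)
  then have "real N powr (1-d) = n powr (1-d) * (1 - 1/n) powr (1-d)"
    using n1 by (simp add: powr_mult)
  also have "\<dots> \<le> n powr (1-d) * (1 - (1-d) * (1/n))"
    by (intro mult_left_mono one_minus_powr_le) (use assms n1 in auto)
  also have "\<dots> = n powr (1-d) - (1-d) * (n powr (1-d) / n)" by (simp add: algebra_simps)
  also have "n powr (1-d) / n = n powr (-d)"
    using n1 by (simp add: powr_diff powr_minus divide_inverse)
  finally show ?thesis using assms unfolding n_def by (simp add: field_simps)
qed

lemma sum_Suc_powr_neg_le:
  fixes d :: real
  assumes "0 \<le> d" "d < 1"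
  shows "(\<Sum>j<N. real (Suc j) powr (-d)) \<le> real N powr (1-d) / (1-d)"
proof (induction N)
  case 0
  then show ?case by simp
next
  case (Suc N)
  then show ?case
    using Suc_powr_neg_le_powr_diff[OF assms, of N] by (simp add: diff_divide_distrib)
qed

lemma powr_neg_one_minus_le_powr_diff:
  fixes d n :: real
  assumes "0 < d" "d \<le> 1" "n > 1"
  shows "n powr (-1-d) \<le> ((n-1) powr (-d) - n powr (-d)) / d"
proof -
  have pos: "0 < (1 - 1/n) powr d" "0 < 1 - d/n" using assms by (auto simp: field_simps)
  have "1 + d/n \<le> 1 / (1 - d/n)"
    using pos(2) assms by (simp add: field_simps)
  also have "\<dots> \<le> 1 / (1 - 1/n) powr d"
    using one_minus_powr_le[of d "1/n"] assms pos by (intro divide_left_mono) auto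
  also have "\<dots> = (1 - 1/n) powr (-d)" by (simp add: powr_minus divide_inverse)
  finally have key: "1 + d/n \<le> (1 - 1/n) powr (-d)" .
  have "n - 1 = n * (1 - 1/n)" using assms by (simp add: field_simps)
  then have "(n-1) powr (-d) = n powr (-d) * (1 - 1/n) powr (-d)"
    using assms by (simp add: powr_mult)
  also have "\<dots> \<ge> n powr (-d) * (1 + d/n)"
    by (rule mult_left_mono[OF key]) simp
  also have "n powr (-d) * (1 + d/n) = n powr (-d) + d * n powr (-1-d)"
    using powr_add[of n "-1" "-d"] assms by (simp add: algebra_simps powr_neg_one)
  finally show ?thesis using assms by (simp add: field_simps)
qed

lemma
  fixes d :: real
  assumes "0 < d" "d \<le> 1" "N \<ge> 1"
  shows summable_powr_tail: "summable (\<lambda>k. real (k + N + 1) powr (-1-d))"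
    and suminf_powr_tail_le: "(\<Sum>k. real (k + N + 1) powr (-1-d)) \<le> real N powr (-d) / d"
proof -
  define f where "f k = real (k + N) powr (-d) / d" for k
  have "(\<lambda>k. real (k + N) powr (-d)) \<longlonglongrightarrow> 0"
    by (intro tendsto_neg_powr filterlim_at_top_mono[OF filterlim_real_sequentially])
       (use assms in auto)
  then have "f \<longlonglongrightarrow> 0"
    unfolding f_def by (rule tendsto_divide_zero)
  then have tele: "(\<lambda>k. f k - f (Suc k)) sums f 0"
    using telescope_sums' by fastforce
  have le: "real (k + N + 1) powr (-1-d) \<le> f k - f (Suc k)" for k
    using powr_neg_one_minus_le_powr_diff[of d "real (k + N + 1)"] assms
    by (simp add: f_def diff_divide_distrib add.commute add.left_commute)
  show sm: "summable (\<lambda>k. real (k + N + 1) powr (-1-d))"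
    by (rule summable_comparison_test[OF _ sums_summable[OF tele]]) (use le in auto)
  have "(\<Sum>k. real (k + N + 1) powr (-1-d)) \<le> (\<Sum>k. f k - f (Suc k))"
    by (rule suminf_le[OF le sm sums_summable[OF tele]])
  also have "\<dots> = f 0" using tele sums_unique by force
  finally show "(\<Sum>k. real (k + N + 1) powr (-1-d)) \<le> real N powr (-d) / d"
    by (simp add: f_def)
qed

section \<open>Hoelder continuity and differentiability of series\<close>

lemma abs_suminf_le_head_tail:
  fixes x :: "nat \<Rightarrow> real" and d A B :: real
  assumes d: "0 < d" "d < 1" and N: "N \<ge> 1"
    and decay: "\<And>j. \<bar>x j\<bar> \<le> A * real (Suc j) powr (-1-d)"
    and head: "\<And>j. \<bar>x j\<bar> \<le> B * real (Suc j) powr (-d)"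
  shows "\<bar>suminf x\<bar> \<le> B * real N powr (1-d) / (1-d) + A * real N powr (-d) / d"
proof -
  have A: "A \<ge> 0" and B: "B \<ge> 0"
    using decay[of 0] head[of 0] by auto
  have d_le: "d \<le> 1" using d by simp
  have tail_sm: "summable (\<lambda>k. A * real (k + N + 1) powr (-1-d))"
    by (rule summable_mult[OF summable_powr_tail[OF d(1) d_le N]])
  have tail_le: "\<bar>x (k + N)\<bar> \<le> A * real (k + N + 1) powr (-1-d)" for k
    using decay[of "k + N"] by simp
  have tail_abs: "summable (\<lambda>k. \<bar>x (k + N)\<bar>)"
    by (rule summable_comparison_test[OF _ tail_sm]) (use tail_le in auto)
  then have sm_abs: "summable (\<lambda>k. \<bar>x k\<bar>)"
    by (subst (asm) summable_iff_shift)
  have "suminf x = (\<Sum>k. x (k + N)) + (\<Sum>j<N. x j)"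
    by (rule suminf_split_initial_segment[OF summable_rabs_cancel[OF sm_abs]])
  also have "\<bar>\<dots>\<bar> \<le> (\<Sum>k. \<bar>x (k + N)\<bar>) + (\<Sum>j<N. \<bar>x j\<bar>)"
    using summable_rabs[OF tail_abs] sum_abs[of x "{..<N}"]
      abs_triangle_ineq[of "\<Sum>k. x (k + N)" "\<Sum>j<N. x j"] by linarith
  also have "(\<Sum>k. \<bar>x (k + N)\<bar>) \<le> A * real N powr (-d) / d"
  proof -
    have "(\<Sum>k. \<bar>x (k + N)\<bar>) \<le> (\<Sum>k. A * real (k + N + 1) powr (-1-d))"
      by (rule suminf_le[OF tail_le tail_abs tail_sm])
    also have "\<dots> = A * (\<Sum>k. real (k + N + 1) powr (-1-d))"
      by (rule suminf_mult[OF summable_powr_tail[OF d(1) d_le N]])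
    also have "\<dots> \<le> A * (real N powr (-d) / d)"
      by (rule mult_left_mono[OF suminf_powr_tail_le[OF d(1) d_le N] A])
    finally show ?thesis by simp
  qed
  also have "(\<Sum>j<N. \<bar>x j\<bar>) \<le> B * real N powr (1-d) / (1-d)"
  proof -
    have "(\<Sum>j<N. \<bar>x j\<bar>) \<le> B * (\<Sum>j<N. real (Suc j) powr (-d))"
      unfolding sum_distrib_left by (rule sum_mono[OF head])
    also have "\<dots> \<le> B * (real N powr (1-d) / (1-d))"
      by (rule mult_left_mono[OF sum_Suc_powr_neg_le]) (use d B in auto)
    finally show ?thesis by simp
  qed
  finally show ?thesis by linarith
qed

lemma abs_suminf_le_powr:
  fixes x :: "nat \<Rightarrow> real" and d h A B :: real
  assumes d: "0 < d" "d < 1" and h: "0 < h" "h < 1"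
    and decay: "\<And>j. \<bar>x j\<bar> \<le> A * real (Suc j) powr (-1-d)"
    and head: "\<And>j. \<bar>x j\<bar> \<le> B * h * real (Suc j) powr (-d)"
  shows "\<bar>suminf x\<bar> \<le> (2 * B / (1-d) + A / d) * h powr d"
proof -
  define N where "N = nat \<lceil>1/h\<rceil>"
  have N_ge: "1/h \<le> real N" and N_le: "real N \<le> 2/h"
    using h of_int_ceiling_le_add_one[of "1/h"] by (auto simp: N_def field_simps)
  have "1 < 1/h" using h by simp
  then have "1 < real N" using N_ge by linarith
  then have "N \<ge> 1" by simp
  have A: "A \<ge> 0" using decay[of 0] by simp
  have "0 \<le> B * h" using order_trans[OF abs_ge_zero head[of 0]] by simp
  then have B: "B \<ge> 0" using h by (simp add: zero_le_mult_iff)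
  have "B * h * real N powr (1-d) \<le> B * h * (2/h) powr (1-d)"
    using d h B N_le \<open>N \<ge> 1\<close> by (intro mult_left_mono powr_mono2) auto
  also have "(2/h) powr (1-d) = 2 powr (1-d) * h powr (d-1)"
  proof -
    have "h powr (d-1) = 1 / h powr (1-d)" using powr_minus_divide[of h "1-d"] by simp
    then show ?thesis using h by (simp add: powr_divide)
  qed
  also have "B * h * (2 powr (1-d) * h powr (d-1)) = B * 2 powr (1-d) * (h * h powr (d-1))"
    by (simp add: ac_simps)
  also have "h * h powr (d-1) = h powr d"
    using h by (simp add: powr_diff powr_minus divide_inverse)
  also have "B * 2 powr (1-d) * h powr d \<le> B * 2 * h powr d"
    using powr_mono[of "1-d" 1 2] d B by (intro mult_right_mono mult_left_mono) auto
  finally have head_le: "B * h * real N powr (1-d) / (1-d) \<le> 2 * B / (1-d) * h powr d"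
    using d by (simp add: divide_right_mono)
  have "real N powr (-d) \<le> (1/h) powr (-d)"
    using d h N_ge by (intro powr_mono2') auto
  also have "(1/h) powr (-d) = h powr d"
    using h by (simp add: powr_divide powr_minus_divide)
  finally have tail_le: "A * real N powr (-d) / d \<le> A / d * h powr d"
    using d A by (simp add: divide_right_mono mult_left_mono)
  have "\<bar>suminf x\<bar> \<le> B * h * real N powr (1-d) / (1-d) + A * real N powr (-d) / d"
    using abs_suminf_le_head_tail[OF d \<open>N \<ge> 1\<close> decay, of "B * h"] head by blast
  also have "\<dots> \<le> (2 * B / (1-d) + A / d) * h powr d"
    using head_le tail_le by (simp add: distrib_right)
  finally show ?thesis .
qed

lemma summable_Suc_powr:
  fixes e :: real
  assumes "e < -1"
  shows "summable (\<lambda>j. real (Suc j) powr e)"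
  using summable_real_powr_iff[of e] summable_Suc_iff[of "\<lambda>j. real j powr e"] assms by simp

lemma holder_suminf:
  fixes g :: "nat \<Rightarrow> 'a::metric_space \<Rightarrow> real"
  assumes d: "0 < d" "d < 1" and "A \<ge> 0" "B \<ge> 0"
    and bound: "\<And>j p. p \<in> S \<Longrightarrow> \<bar>g j p\<bar> \<le> A * real (Suc j) powr (-1-d)"
    and lipschitz: "\<And>j p q. p \<in> S \<Longrightarrow> q \<in> S \<Longrightarrow>
                      \<bar>g j p - g j q\<bar> \<le> B * real (Suc j) powr (-d) * dist p q"
  shows "\<exists>L>0. \<forall>p\<in>S. \<forall>q\<in>S. \<bar>(\<Sum>j. g j p) - (\<Sum>j. g j q)\<bar> \<le> L * dist p q powr d"
proof (intro exI conjI ballI)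
  define L where "L = 2 * B / (1-d) + 2 * A / (1-d) + 2 * A / d + 1"
  show "L > 0" unfolding L_def using assms by (simp add: add_nonneg_pos)
  fix p q assume p: "p \<in> S" and q: "q \<in> S"
  define h where "h = dist p q"
  define x where "x j = g j p - g j q" for j
  have decay: "\<bar>x j\<bar> \<le> (2 * A) * real (Suc j) powr (-1-d)" for j
    using bound[OF p, of j] bound[OF q, of j] unfolding x_def by linarith
  have head: "\<bar>x j\<bar> \<le> B * h * real (Suc j) powr (-d)" for j
    using lipschitz[OF p q, of j] unfolding x_def h_def by (simp add: ac_simps)
  have sm: "summable (\<lambda>j. g j r)" if "r \<in> S" for r
    by (rule summable_comparison_test[OF _ summable_mult[OF summable_Suc_powr[of "-1-d"]]])
       (use bound[OF that] d in auto)
  have diff: "(\<Sum>j. g j p) - (\<Sum>j. g j q) = suminf x"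
    unfolding x_def using suminf_diff[OF sm[OF p] sm[OF q]] by simp
  consider "h = 0" | "0 < h" "h < 1" | "h \<ge> 1" unfolding h_def by force
  then show "\<bar>(\<Sum>j. g j p) - (\<Sum>j. g j q)\<bar> \<le> L * dist p q powr d"
  proof cases
    case 1
    then show ?thesis unfolding h_def by simp
  next
    case 2
    have "\<bar>suminf x\<bar> \<le> (2 * B / (1-d) + 2 * A / d) * h powr d"
      using abs_suminf_le_powr[OF d 2 decay head] by simp
    also have "\<dots> \<le> L * h powr d"
      unfolding L_def using assms by (intro mult_right_mono) auto
    finally show ?thesis unfolding diff h_def .
  next
    case 3
    have "\<bar>x j\<bar> \<le> (2 * A) * real (Suc j) powr (-d)" for j
      by (intro order_trans[OF decay[of j]] mult_left_mono powr_mono) (use \<open>A \<ge> 0\<close> in auto)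
    then have "\<bar>suminf x\<bar> \<le> 2 * A / (1-d) + 2 * A / d"
      using abs_suminf_le_head_tail[OF d order.refl decay] by simp
    also have "\<dots> \<le> L" unfolding L_def using assms by simp
    also have "\<dots> \<le> L * h powr d"
      using 3 d \<open>L > 0\<close> by (simp add: ge_one_powr_ge_zero)
    finally show ?thesis unfolding diff h_def .
  qed
qed

lemma has_field_derivative_suminf:
  fixes f f' :: "nat \<Rightarrow> 'a::{real_normed_field,banach} \<Rightarrow> 'a"
  assumes "convex S"
    and deriv: "\<And>j x. x \<in> S \<Longrightarrow> (f j has_field_derivative f' j x) (at x within S)"
    and majorant: "\<And>j x. x \<in> S \<Longrightarrow> norm (f' j x) \<le> B j" "summable B"
    and summable: "\<And>x. x \<in> S \<Longrightarrow> summable (\<lambda>j. f j x)"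
    and "x \<in> S"
  shows "((\<lambda>x. \<Sum>j. f j x) has_field_derivative (\<Sum>j. f' j x)) (at x within S)"
proof -
  obtain g where g: "\<forall>y\<in>S. (\<lambda>j. f j y) sums g y \<and>
      (g has_field_derivative (\<Sum>j. f' j y)) (at y within S)"
    using has_field_derivative_series[OF \<open>convex S\<close> deriv Weierstrass_m_test[OF majorant]
        \<open>x \<in> S\<close> summable[OF \<open>x \<in> S\<close>]] by blast
  show ?thesis
    by (rule has_field_derivative_transform_within[where f = g and d = 1]) (use g \<open>x \<in> S\<close> sums_unique in auto)
qed

section \<open>The kernel series\<close>

lemma abs_mult_diff_le:
  fixes a a' b b' :: "'a::linordered_idom"
  assumes "\<bar>a - a'\<bar> \<le> Ea" "\<bar>b - b'\<bar> \<le> Eb" "\<bar>b\<bar> \<le> Bb" "\<bar>a'\<bar> \<le> Ba"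
  shows "\<bar>a * b - a' * b'\<bar> \<le> Ea * Bb + Ba * Eb"
proof -
  have "a * b - a' * b' = (a - a') * b + a' * (b - b')" by (simp add: algebra_simps)
  also have "\<bar>\<dots>\<bar> \<le> \<bar>a - a'\<bar> * \<bar>b\<bar> + \<bar>a'\<bar> * \<bar>b - b'\<bar>"
    by (metis abs_mult abs_triangle_ineq)
  also have "\<dots> \<le> Ea * Bb + Ba * Eb"
    using assms by (intro add_mono mult_mono) auto
  finally show ?thesis .
qed

lemma finite_ex_uniform_constant:
  fixes P :: "'i \<Rightarrow> real \<Rightarrow> bool"
  assumes "finite I" and ex: "\<And>i. i \<in> I \<Longrightarrow> \<exists>L>0. P i L"
    and mono: "\<And>i L L'. P i L \<Longrightarrow> L \<le> L' \<Longrightarrow> P i L'"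
  shows "\<exists>L>0. \<forall>i\<in>I. P i L"
  using assms(1) ex
proof (induction I rule: finite_induct)
  case empty
  then show ?case by (auto intro: exI[of _ 1])
next
  case (insert i I)
  obtain L1 where "L1 > 0" "P i L1" using insert.prems by blast
  moreover obtain L2 where "L2 > 0" "\<forall>j\<in>I. P j L2" using insert by blast
  ultimately show ?case
    by (intro exI[of _ "max L1 L2"]) (auto intro: mono)
qed

lemma mem_unit_square: "p \<in> unit_square \<longleftrightarrow> fst p \<in> {0..1} \<and> snd p \<in> {0..1}"
  by (cases p) (simp add: unit_square_def)

lemma holder_C_cong:
  assumes "\<And>p. p \<in> unit_square \<Longrightarrow> K p = K' p" "holder_C m \<beta> K'"
  shows "holder_C m \<beta> K"
proof -
  have eq: "(\<forall>p\<in>unit_square. D 0 0 p = K p) \<longleftrightarrow> (\<forall>p\<in>unit_square. D 0 0 p = K' p)" for D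
    using assms(1) by auto
  show ?thesis using assms(2) unfolding holder_C_def eq .
qed

(* \<phi> j l stands for the l-th derivative of \<psi>_(j+1) and w j for \<lambda>_(j+1): indices are
   shifted so that all series start at 0. *)
locale kernel_series =
  fixes \<phi> :: "nat \<Rightarrow> nat \<Rightarrow> real \<Rightarrow> real" and w M :: "nat \<Rightarrow> real" and \<sigma> c \<gamma> :: real
  assumes deriv: "\<And>j l u. u \<in> {0..1} \<Longrightarrow>
                    (\<phi> j l has_real_derivative \<phi> j (Suc l) u) (at u within {0..1})"
    and bound: "\<And>j l u. u \<in> {0..1} \<Longrightarrow> \<bar>\<phi> j l u\<bar> \<le> M l * real (Suc j) powr (real l + \<sigma>)"
    and w_nonneg: "\<And>j. 0 \<le> w j"
    and w_decay: "\<And>j. w j \<le> c * real (Suc j) powr (-(\<gamma> + 1))"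
begin

definition summand :: "nat \<Rightarrow> nat \<Rightarrow> nat \<Rightarrow> real \<times> real \<Rightarrow> real" where
  "summand a b j p = w j * \<phi> j a (fst p) * \<phi> j b (snd p)"

definition kernel_deriv :: "nat \<Rightarrow> nat \<Rightarrow> real \<times> real \<Rightarrow> real" where
  "kernel_deriv a b p = (\<Sum>j. summand a b j p)"

lemma M_nonneg: "0 \<le> M l"
  using order_trans[OF abs_ge_zero bound[of 0 0 l]] by simp

lemma c_nonneg: "0 \<le> c"
  using w_nonneg[of 0] w_decay[of 0] by simp

lemma powr_exponents_combine:
  fixes n :: real
  assumes "x + y = z + (\<gamma> - 2 * \<sigma>) + 1"
  shows "n powr (-(\<gamma> + 1)) * (n powr (x + \<sigma>) * n powr (y + \<sigma>)) = n powr z"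
proof -
  have "z = -(\<gamma> + 1) + ((x + \<sigma>) + (y + \<sigma>))" using assms by simp
  then show ?thesis by (simp only: powr_add)
qed

lemma summand_bound:
  assumes "p \<in> unit_square"
  shows "\<bar>summand a b j p\<bar> \<le> c * M a * M b * real (Suc j) powr (real (a + b) - (\<gamma> - 2 * \<sigma>) - 1)"
proof -
  let ?n = "real (Suc j)"
  have "\<bar>summand a b j p\<bar> = w j * (\<bar>\<phi> j a (fst p)\<bar> * \<bar>\<phi> j b (snd p)\<bar>)"
    using w_nonneg[of j] by (simp add: summand_def abs_mult)
  also have "\<dots> \<le> c * ?n powr (-(\<gamma> + 1)) * (M a * ?n powr (real a + \<sigma>) * (M b * ?n powr (real b + \<sigma>)))"
  proof (rule mult_mono[OF w_decay mult_mono])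
    show "\<bar>\<phi> j a (fst p)\<bar> \<le> M a * ?n powr (real a + \<sigma>)" "\<bar>\<phi> j b (snd p)\<bar> \<le> M b * ?n powr (real b + \<sigma>)"
      using assms bound by (auto simp: mem_unit_square)
  qed (use c_nonneg M_nonneg in auto)
  also have "\<dots> = c * M a * M b * (?n powr (-(\<gamma> + 1)) * (?n powr (real a + \<sigma>) * ?n powr (real b + \<sigma>)))"
    by (simp only: mult_ac)
  also have "?n powr (-(\<gamma> + 1)) * (?n powr (real a + \<sigma>) * ?n powr (real b + \<sigma>))
      = ?n powr (real (a + b) - (\<gamma> - 2 * \<sigma>) - 1)"
    by (rule powr_exponents_combine) simp
  finally show ?thesis .
qed

lemma phi_lipschitz:
  assumes "x \<in> {0..1}" "y \<in> {0..1}"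
  shows "\<bar>\<phi> j l x - \<phi> j l y\<bar> \<le> M (Suc l) * real (Suc j) powr (real (Suc l) + \<sigma>) * \<bar>x - y\<bar>"
proof -
  have "norm (\<phi> j l x - \<phi> j l y) \<le> M (Suc l) * real (Suc j) powr (real (Suc l) + \<sigma>) * norm (x - y)"
    by (rule field_differentiable_bound[where S = "{0..1}" and f' = "\<phi> j (Suc l)"])
       (use deriv bound[of _ j "Suc l"] assms in \<open>auto simp del: of_nat_Suc\<close>)
  then show ?thesis by simp
qed

lemma phi_product_lipschitz:
  assumes "p \<in> unit_square" "q \<in> unit_square"
  shows "\<bar>\<phi> j a (fst p) * \<phi> j b (snd p) - \<phi> j a (fst q) * \<phi> j b (snd q)\<bar>
    \<le> (M (Suc a) * real (Suc j) powr (real (Suc a) + \<sigma>) * dist p q) * (M b * real (Suc j) powr (real b + \<sigma>))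
      + (M a * real (Suc j) powr (real a + \<sigma>)) * (M (Suc b) * real (Suc j) powr (real (Suc b) + \<sigma>) * dist p q)"
proof (rule abs_mult_diff_le)
  have dist: "\<bar>fst p - fst q\<bar> \<le> dist p q" "\<bar>snd p - snd q\<bar> \<le> dist p q"
    using dist_fst_le[of p q] dist_snd_le[of p q] by (simp_all add: dist_real_def)
  show "\<bar>\<phi> j a (fst p) - \<phi> j a (fst q)\<bar> \<le> M (Suc a) * real (Suc j) powr (real (Suc a) + \<sigma>) * dist p q"
    using assms M_nonneg
    by (intro order_trans[OF phi_lipschitz mult_left_mono[OF dist(1)]]) (auto simp: mem_unit_square)
  show "\<bar>\<phi> j b (snd p) - \<phi> j b (snd q)\<bar> \<le> M (Suc b) * real (Suc j) powr (real (Suc b) + \<sigma>) * dist p q"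
    using assms M_nonneg
    by (intro order_trans[OF phi_lipschitz mult_left_mono[OF dist(2)]]) (auto simp: mem_unit_square)
qed (use assms bound in \<open>auto simp: mem_unit_square\<close>)

lemma summand_lipschitz:
  assumes "p \<in> unit_square" "q \<in> unit_square"
  shows "\<bar>summand a b j p - summand a b j q\<bar>
    \<le> c * (M (Suc a) * M b + M a * M (Suc b)) * real (Suc j) powr (real (a + b) - (\<gamma> - 2 * \<sigma>)) * dist p q"
proof -
  let ?n = "real (Suc j)"
  have exps: "?n powr (-(\<gamma> + 1)) * (?n powr (real (Suc a) + \<sigma>) * ?n powr (real b + \<sigma>))
      = ?n powr (real (a + b) - (\<gamma> - 2 * \<sigma>))"
    "?n powr (-(\<gamma> + 1)) * (?n powr (real a + \<sigma>) * ?n powr (real (Suc b) + \<sigma>))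
      = ?n powr (real (a + b) - (\<gamma> - 2 * \<sigma>))"
    by (rule powr_exponents_combine; simp)+
  have "\<bar>summand a b j p - summand a b j q\<bar>
      = w j * \<bar>\<phi> j a (fst p) * \<phi> j b (snd p) - \<phi> j a (fst q) * \<phi> j b (snd q)\<bar>"
    using w_nonneg[of j] by (simp add: summand_def abs_mult mult.assoc flip: right_diff_distrib)
  also have "\<dots> \<le> c * ?n powr (-(\<gamma> + 1))
      * ((M (Suc a) * ?n powr (real (Suc a) + \<sigma>) * dist p q) * (M b * ?n powr (real b + \<sigma>))
        + (M a * ?n powr (real a + \<sigma>)) * (M (Suc b) * ?n powr (real (Suc b) + \<sigma>) * dist p q))"
    by (rule mult_mono[OF w_decay phi_product_lipschitz[OF assms]]) (use c_nonneg in auto)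
  also have "\<dots> = c * (M (Suc a) * M b + M a * M (Suc b)) * ?n powr (real (a + b) - (\<gamma> - 2 * \<sigma>))
      * dist p q"
  proof -
    \<comment> \<open>stated over fresh variables so that simp leaves the powers untouched\<close>
    have ring: "c * e * ((u1 * v1 * r) * (u2 * v2) + (u3 * v3) * (u4 * v4 * r))
        = c * (u1 * u2 + u3 * u4) * x * r"
      if "e * (v1 * v2) = x" "e * (v3 * v4) = x" for e u1 v1 r u2 v2 u3 v3 u4 v4 x :: real
      using that by (simp add: algebra_simps)
    show ?thesis by (rule ring[OF exps])
  qed
  finally show ?thesis .
qed

lemma summable_majorant:
  assumes "real (a + b) < \<gamma> - 2 * \<sigma>"
  shows "summable (\<lambda>j. C * real (Suc j) powr (real (a + b) - (\<gamma> - 2 * \<sigma>) - 1))"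
  using assms by (intro summable_mult summable_Suc_powr) simp

lemma summable_summand:
  assumes "real (a + b) < \<gamma> - 2 * \<sigma>" "p \<in> unit_square"
  shows "summable (\<lambda>j. summand a b j p)"
  by (rule summable_comparison_test[OF _ summable_majorant[OF assms(1)]])
     (use summand_bound[OF assms(2)] in auto)

lemma continuous_on_summand: "continuous_on unit_square (summand a b j)"
proof -
  have cont: "continuous_on {0..1} (\<phi> j l)" for l
    by (rule DERIV_continuous_on[OF deriv])
  have "fst ` unit_square \<subseteq> {0..1}" "snd ` unit_square \<subseteq> {0..1}"
    by (auto simp: mem_unit_square)
  then have "continuous_on unit_square (\<lambda>p. \<phi> j l (fst p))"
    and "continuous_on unit_square (\<lambda>p. \<phi> j l (snd p))" for l
    by (intro continuous_on_compose2[OF cont continuous_on_fst[OF continuous_on_id]]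
        continuous_on_compose2[OF cont continuous_on_snd[OF continuous_on_id]]; simp)+
  then show ?thesis
    unfolding summand_def by (intro continuous_on_mult continuous_on_const)
qed

lemma continuous_on_kernel_deriv:
  assumes "real (a + b) < \<gamma> - 2 * \<sigma>"
  shows "continuous_on unit_square (kernel_deriv a b)"
proof -
  have ul: "uniform_limit unit_square (\<lambda>n p. \<Sum>j<n. summand a b j p) (kernel_deriv a b) sequentially"
    unfolding kernel_deriv_def
    by (rule Weierstrass_m_test[OF _ summable_majorant[OF assms]]) (use summand_bound in auto)
  show ?thesis
    by (rule uniform_limit_theorem[OF _ ul])
       (auto intro!: always_eventually continuous_on_sum continuous_on_summand)
qed

lemma kernel_deriv_has_derivative_fst:
  assumes "real (a + b) + 1 < \<gamma> - 2 * \<sigma>" "s \<in> {0..1}" "t \<in> {0..1}"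
  shows "((\<lambda>x. kernel_deriv a b (x, t)) has_real_derivative kernel_deriv (Suc a) b (s, t))
           (at s within {0..1})"
  unfolding kernel_deriv_def
proof (rule has_field_derivative_suminf[where B = "\<lambda>j. c * M (Suc a) * M b
    * real (Suc j) powr (real (Suc a + b) - (\<gamma> - 2 * \<sigma>) - 1)"])
  fix j and x :: real assume x: "x \<in> {0..1}"
  have pt: "(x, t) \<in> unit_square" using x assms by (simp add: mem_unit_square)
  show "((\<lambda>x. summand a b j (x, t)) has_real_derivative summand (Suc a) b j (x, t)) (at x within {0..1})"
    unfolding summand_def fst_conv snd_conv
    by (intro DERIV_cmult DERIV_cmult_right deriv x)
  show "norm (summand (Suc a) b j (x, t))
      \<le> c * M (Suc a) * M b * real (Suc j) powr (real (Suc a + b) - (\<gamma> - 2 * \<sigma>) - 1)"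
    using summand_bound[OF pt] by (simp only: real_norm_def)
  show "summable (\<lambda>j. summand a b j (x, t))"
    using summable_summand[OF _ pt] assms(1) by simp
qed (use summable_majorant[of "Suc a" b] assms in auto)

lemma kernel_deriv_has_derivative_snd:
  assumes "real (a + b) + 1 < \<gamma> - 2 * \<sigma>" "s \<in> {0..1}" "t \<in> {0..1}"
  shows "((\<lambda>y. kernel_deriv a b (s, y)) has_real_derivative kernel_deriv a (Suc b) (s, t))
           (at t within {0..1})"
  unfolding kernel_deriv_def
proof (rule has_field_derivative_suminf[where B = "\<lambda>j. c * M a * M (Suc b)
    * real (Suc j) powr (real (a + Suc b) - (\<gamma> - 2 * \<sigma>) - 1)"])
  fix j and y :: real assume y: "y \<in> {0..1}"
  have pt: "(s, y) \<in> unit_square" using y assms by (simp add: mem_unit_square)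
  show "((\<lambda>y. summand a b j (s, y)) has_real_derivative summand a (Suc b) j (s, y)) (at y within {0..1})"
    unfolding summand_def fst_conv snd_conv
    by (intro DERIV_cmult deriv y)
  show "norm (summand a (Suc b) j (s, y))
      \<le> c * M a * M (Suc b) * real (Suc j) powr (real (a + Suc b) - (\<gamma> - 2 * \<sigma>) - 1)"
    using summand_bound[OF pt] by (simp only: real_norm_def)
  show "summable (\<lambda>j. summand a b j (s, y))"
    using summable_summand[OF _ pt] assms(1) by simp
qed (use summable_majorant[of a "Suc b"] assms in auto)

lemma kernel_deriv_holder:
  assumes "0 < e" "e < 1" "real (a + b) + e \<le> \<gamma> - 2 * \<sigma>"
  shows "\<exists>L>0. \<forall>p\<in>unit_square. \<forall>q\<in>unit_square.
           \<bar>kernel_deriv a b p - kernel_deriv a b q\<bar> \<le> L * dist p q powr e"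
  unfolding kernel_deriv_def
proof (rule holder_suminf[OF assms(1,2)])
  show A: "0 \<le> c * M a * M b" and B: "0 \<le> c * (M (Suc a) * M b + M a * M (Suc b))"
    using c_nonneg M_nonneg by simp_all
  fix j p q assume p: "p \<in> unit_square" and q: "q \<in> unit_square"
  let ?n = "real (Suc j)"
  have "\<bar>summand a b j p\<bar> \<le> c * M a * M b * ?n powr (real (a + b) - (\<gamma> - 2 * \<sigma>) - 1)"
    by (rule summand_bound[OF p])
  also have "\<dots> \<le> c * M a * M b * ?n powr (-1-e)"
    by (intro mult_left_mono[OF powr_mono A]) (use assms in auto)
  finally show "\<bar>summand a b j p\<bar> \<le> c * M a * M b * ?n powr (-1-e)" .
  have "\<bar>summand a b j p - summand a b j q\<bar>
      \<le> c * (M (Suc a) * M b + M a * M (Suc b)) * ?n powr (real (a + b) - (\<gamma> - 2 * \<sigma>)) * dist p q"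
    by (rule summand_lipschitz[OF p q])
  also have "\<dots> \<le> c * (M (Suc a) * M b + M a * M (Suc b)) * ?n powr (-e) * dist p q"
    by (intro mult_right_mono mult_left_mono[OF powr_mono B]) (use assms in auto)
  finally show "\<bar>summand a b j p - summand a b j q\<bar>
      \<le> c * (M (Suc a) * M b + M a * M (Suc b)) * ?n powr (-e) * dist p q" .
qed

lemma holder_C_kernel_deriv:
  assumes "0 < e" "e < 1" "real m + e \<le> \<gamma> - 2 * \<sigma>"
  shows "holder_C m e (kernel_deriv 0 0)"
  unfolding holder_C_def
proof (intro exI[of _ kernel_deriv] conjI allI impI ballI)
  fix a b assume "a + b \<le> m"
  then show "continuous_on unit_square (kernel_deriv a b)"
    using assms by (intro continuous_on_kernel_deriv) simp
next
  fix a b and s t :: real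
  assume ab: "a + b < m" and st: "s \<in> {0..1}" "t \<in> {0..1}"
  have "real (a + b + 1) \<le> real m"
    using ab by (subst of_nat_le_iff) simp
  then have ab': "real (a + b) + 1 < \<gamma> - 2 * \<sigma>"
    using assms by simp
  show "((\<lambda>x. kernel_deriv a b (x, t)) has_real_derivative kernel_deriv (Suc a) b (s, t))
          (at s within {0..1})"
    by (rule kernel_deriv_has_derivative_fst[OF ab' st])
  show "((\<lambda>y. kernel_deriv a b (s, y)) has_real_derivative kernel_deriv a (Suc b) (s, t))
          (at t within {0..1})"
    by (rule kernel_deriv_has_derivative_snd[OF ab' st])
next
  have "\<exists>L>0. \<forall>a\<in>{..m}. \<forall>p\<in>unit_square. \<forall>q\<in>unit_square.
          \<bar>kernel_deriv a (m - a) p - kernel_deriv a (m - a) q\<bar> \<le> L * dist p q powr e"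
  proof (rule finite_ex_uniform_constant)
    fix a assume "a \<in> {..m}"
    then show "\<exists>L>0. \<forall>p\<in>unit_square. \<forall>q\<in>unit_square.
        \<bar>kernel_deriv a (m - a) p - kernel_deriv a (m - a) q\<bar> \<le> L * dist p q powr e"
      using assms by (intro kernel_deriv_holder) auto
  next
    fix a and L L' :: real
    assume L: "\<forall>p\<in>unit_square. \<forall>q\<in>unit_square.
        \<bar>kernel_deriv a (m - a) p - kernel_deriv a (m - a) q\<bar> \<le> L * dist p q powr e"
      and "L \<le> L'"
    show "\<forall>p\<in>unit_square. \<forall>q\<in>unit_square.
        \<bar>kernel_deriv a (m - a) p - kernel_deriv a (m - a) q\<bar> \<le> L' * dist p q powr e"
      using L order_trans[OF _ mult_right_mono[OF \<open>L \<le> L'\<close> powr_ge_zero]] by blast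
  qed simp
  then obtain L where "L > 0" and L: "\<forall>a\<in>{..m}. \<forall>p\<in>unit_square. \<forall>q\<in>unit_square.
      \<bar>kernel_deriv a (m - a) p - kernel_deriv a (m - a) q\<bar> \<le> L * dist p q powr e"
    by blast
  show "\<exists>L>0. \<forall>a b. a + b = m \<longrightarrow> (\<forall>p\<in>unit_square. \<forall>q\<in>unit_square.
          \<bar>kernel_deriv a b p - kernel_deriv a b q\<bar> \<le> L * dist p q powr e)"
  proof (intro exI[of _ L] conjI allI impI)
    fix a b assume "a + b = m"
    then have "a \<in> {..m}" "m - a = b" by auto
    then show "\<forall>p\<in>unit_square. \<forall>q\<in>unit_square.
        \<bar>kernel_deriv a b p - kernel_deriv a b q\<bar> \<le> L * dist p q powr e"
      using L by auto
  qed (rule \<open>L > 0\<close>)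
qed simp

end

lemma Greatest_of_int_less: "(GREATEST k::int. real_of_int k < x) = \<lceil>x\<rceil> - 1"
proof (rule Greatest_equality)
  show "real_of_int (\<lceil>x\<rceil> - 1) < x" using ceiling_correct[of x] by simp
  fix k :: int assume "real_of_int k < x"
  then show "k \<le> \<lceil>x\<rceil> - 1" using le_of_int_ceiling[of x] by linarith
qed

lemma
  fixes x :: real
  assumes "int m = \<lceil>x\<rceil> - 1"
  shows of_nat_less_of_ceiling_pred: "real m < x"
    and le_of_nat_ceiling_pred_plus_one: "x \<le> real m + 1"
    and Ints_iff_eq_of_nat_ceiling_pred_plus_one: "x \<in> \<int> \<longleftrightarrow> x = real m + 1"
proof -
  have "real_of_int (int m) = real_of_int (\<lceil>x\<rceil> - 1)" using assms by (rule arg_cong)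
  then have m: "real m = real_of_int \<lceil>x\<rceil> - 1" by simp
  show "real m < x" "x \<le> real m + 1" using m ceiling_correct[of x] by linarith+
  show "x \<in> \<int> \<longleftrightarrow> x = real m + 1"
  proof
    assume "x \<in> \<int>"
    then show "x = real m + 1" using m by (auto elim: Ints_cases)
  next
    assume "x = real m + 1"
    then show "x \<in> \<int>" by (simp only:) (intro Ints_add Ints_of_nat Ints_1)
  qed
qed

lemma holder_C_eigen_series:
  fixes \<psi> :: "nat \<Rightarrow> real \<Rightarrow> real" and D\<psi> :: "nat \<Rightarrow> nat \<Rightarrow> real \<Rightarrow> real"
    and lam :: "nat \<Rightarrow> real" and K :: "real \<times> real \<Rightarrow> real"
  assumes D\<psi>_0: "\<forall>j\<ge>1. \<forall>u\<in>{0..1}. D\<psi> j 0 u = \<psi> j u"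
    and D\<psi>_deriv: "\<forall>j\<ge>1. \<forall>l. \<forall>u\<in>{0..1}.
          (D\<psi> j l has_real_derivative D\<psi> j (Suc l) u) (at u within {0..1})"
    and D\<psi>_bound: "\<forall>l. \<exists>M>0. \<forall>j\<ge>1. \<forall>u\<in>{0..1}. \<bar>D\<psi> j l u\<bar> \<le> M * real j powr (real l + \<sigma>)"
    and lam_nonneg: "\<forall>j\<ge>1. 0 \<le> lam j"
    and lam_decay: "\<forall>j\<ge>1. lam j \<le> c * real j powr (-(\<gamma> + 1))"
    and K_def: "\<forall>s t. K (s, t) = (\<Sum>j. lam (Suc j) * \<psi> (Suc j) s * \<psi> (Suc j) t)"
    and e: "0 < e" "e < 1" "real m + e \<le> \<gamma> - 2 * \<sigma>"
  shows "holder_C m e K"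
proof -
  obtain M where M: "\<forall>l. \<forall>j\<ge>1. \<forall>u\<in>{0..1}. \<bar>D\<psi> j l u\<bar> \<le> M l * real j powr (real l + \<sigma>)"
    using choice[OF D\<psi>_bound] by blast
  interpret kernel_series "\<lambda>j. D\<psi> (Suc j)" "\<lambda>j. lam (Suc j)" M \<sigma> c \<gamma>
  proof unfold_locales
    fix j l and u :: real assume u: "u \<in> {0..1}"
    show "(D\<psi> (Suc j) l has_real_derivative D\<psi> (Suc j) (Suc l) u) (at u within {0..1})"
      using D\<psi>_deriv u by simp
    show "\<bar>D\<psi> (Suc j) l u\<bar> \<le> M l * real (Suc j) powr (real l + \<sigma>)"
      using M[rule_format, where l = l and j = "Suc j" and u = u] u by simp
  next
    fix j
    show "0 \<le> lam (Suc j)" using lam_nonneg by simp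
    show "lam (Suc j) \<le> c * real (Suc j) powr (-(\<gamma> + 1))"
      using lam_decay[rule_format, of "Suc j"] by simp
  qed
  show ?thesis
  proof (rule holder_C_cong[OF _ holder_C_kernel_deriv[OF e]])
    show "K p = kernel_deriv 0 0 p" if "p \<in> unit_square" for p
      using that K_def D\<psi>_0 by (cases p) (simp add: kernel_deriv_def summand_def mem_unit_square)
  qed
qed

theorem mainTheorem11:
  fixes \<psi> :: "nat \<Rightarrow> real \<Rightarrow> real" and lam :: "nat \<Rightarrow> real"
    and \<sigma> c \<gamma> \<alpha> \<beta> :: real and m :: nat and K :: "real \<times> real \<Rightarrow> real"
  assumes onb: "orthonormal_basis_L2_01 \<psi>"
    and lam_pos: "\<forall>j\<ge>1. lam j > 0"
    and lam_summable: "summable (\<lambda>j. lam (Suc j))"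
    and \<sigma>_nonneg: "\<sigma> \<ge> 0"
    and smooth_bound: "\<exists>D\<psi> :: nat \<Rightarrow> nat \<Rightarrow> real \<Rightarrow> real.
          (\<forall>j\<ge>1. \<forall>u\<in>{0..1}. D\<psi> j 0 u = \<psi> j u) \<and>
          (\<forall>j\<ge>1. \<forall>l. \<forall>u\<in>{0..1}.
             (D\<psi> j l has_real_derivative D\<psi> j (Suc l) u) (at u within {0..1})) \<and>
          (\<forall>l. \<exists>M>0. \<forall>j\<ge>1. \<forall>u\<in>{0..1}. \<bar>D\<psi> j l u\<bar> \<le> M * real j powr (real l + \<sigma>))"
    and c_pos: "c > 0" and \<gamma>_pos: "\<gamma> > 0"
    and lam_decay: "\<forall>j\<ge>1. lam j \<le> c * real j powr (-(\<gamma> + 1))"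
    and \<alpha>_def: "\<alpha> = \<gamma> - 2 * \<sigma>"
    and \<alpha>_pos: "\<alpha> > 0"
    and m_def: "int m = (GREATEST k::int. real_of_int k < \<alpha>)"
    and \<beta>_def: "\<beta> = \<alpha> - real m"
    and K_def: "\<forall>s t. K (s, t) = (\<Sum>j. lam (Suc j) * \<psi> (Suc j) s * \<psi> (Suc j) t)"
  shows "(\<alpha> \<notin> \<int> \<longrightarrow> holder_C m \<beta> K) \<and>
         (\<alpha> \<in> \<int> \<longrightarrow> (\<forall>\<delta>. 0 < \<delta> \<and> \<delta> < 1 \<longrightarrow> holder_C m \<delta> K))"
proof -
  obtain D\<psi> :: "nat \<Rightarrow> nat \<Rightarrow> real \<Rightarrow> real" where
    "\<forall>j\<ge>1. \<forall>u\<in>{0..1}. D\<psi> j 0 u = \<psi> j u"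
    "\<forall>j\<ge>1. \<forall>l. \<forall>u\<in>{0..1}. (D\<psi> j l has_real_derivative D\<psi> j (Suc l) u) (at u within {0..1})"
    "\<forall>l. \<exists>M>0. \<forall>j\<ge>1. \<forall>u\<in>{0..1}. \<bar>D\<psi> j l u\<bar> \<le> M * real j powr (real l + \<sigma>)"
    using smooth_bound by blast
  moreover have "\<forall>j\<ge>1. 0 \<le> lam j" using lam_pos by (simp add: less_imp_le)
  ultimately have holder: "holder_C m e K" if "0 < e" "e < 1" "real m + e \<le> \<alpha>" for e
    using holder_C_eigen_series[OF _ _ _ _ lam_decay K_def that(1,2)] that(3) \<alpha>_def by simp
  have m: "int m = \<lceil>\<alpha>\<rceil> - 1"
    using m_def by (simp add: Greatest_of_int_less)
  show ?thesis
  proof (intro conjI impI allI)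
    assume "\<alpha> \<notin> \<int>"
    then show "holder_C m \<beta> K"
      using holder[of \<beta>] \<beta>_def of_nat_less_of_ceiling_pred[OF m]
        le_of_nat_ceiling_pred_plus_one[OF m] Ints_iff_eq_of_nat_ceiling_pred_plus_one[OF m]
      by simp
  next
    fix \<delta> :: real assume "\<alpha> \<in> \<int>" "0 < \<delta> \<and> \<delta> < 1"
    then show "holder_C m \<delta> K"
      using holder[of \<delta>] Ints_iff_eq_of_nat_ceiling_pred_plus_one[OF m] by simp
  qed
qed

end
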